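(* Let $m\ge1$, $k\ge 1$, $n\ge 2$ be integers, let $\ell=(\ell_1,\dots,\ell_m)$ with $\ell_i\ge0$, $\sum_i\ell_i=1$, and let $\mathbf{P}=(p_{ij})$ be a symmetric $m\times m$ matrix with entries in $[0,1]$. Let $S\subseteq\{(i,j): i,j\in\{1,\dots,n\},\ i<j\}$ be any fixed set of node pairs, and let $A$ be the event that every pair in $S$ is an edge of the graph. Then $$\Pr_{\mathcal{W}_k(\mathbf{P},\ell)}(A) = \Pr_{\mathcal{W}_1(\mathbf{P},\ell)}(A)^k,$$ where $\Pr_{\mathcal{W}_j(\mathbf{P},\ell)}$ denotes probability for a random graph on nodes $\{1,\dots,n\}$ drawn from $\mathcal{W}_j(\mathbf{P},\ell)$.
   Context: Multifractal network generator (MFNG). Given $m$, $\ell$, $\mathbf{P}$ and a recursion depth $k\ge 1$, the measure $\mathcal{W}_k(\mathbf{P},\ell)$ is the distribution of the undirected random graph on $n$ labelled nodes produced as follows. (1) Partition $[0,1]$ into $m$ consecutive subintervals of lengths $\ell_1,\dots,\ell_m$; recursively partition each subinterval into $m$ pieces with relative lengths $\ell_1,\dots,\ell_m$, for a total of $k$ levels, obtaining $m^k$ intervals indexed by $(i_1,\dots,i_k)\in[m]^k$ with lengths $\prod_{r=1}^k\ell_{i_r}$. (2) Each node $u\in\{1,\dots,n\}$ is placed at an independent uniform point of $[0,1]$ and receives the $k$-tuple of categories $c(u)=(i_1,\dots,i_k)$ of the interval containing it (so $\Pr(c(u)=(i_1,\dots,i_k))=\prod_r\ell_{i_r}$, independently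 across nodes). (3) Conditionally on the categories, independently for each pair $u\ne v$ with $c(u)=(i_1,\dots,i_k)$, $c(v)=(j_1,\dots,j_k)$, the edge $\{u,v\}$ is present with probability $\prod_{r=1}^k p_{i_rj_r}$. *)

theory Defs
  imports "HOL-Probability.Probability"
begin

text \<open>Categories are 0,...,m-1 (the paper's 1,...,m shifted
  by one); nodes are 1,...,n; a graph is represented by the indicator function of its edge
  set on pairs (u,v) with u < v.\<close>

definition level_pmf :: "nat \<Rightarrow> (nat \<Rightarrow> real) \<Rightarrow> nat pmf" where
  "level_pmf m l = embed_pmf (\<lambda>i. if i < m then l i else 0)"

definition cat_pmf :: "nat \<Rightarrow> (nat \<Rightarrow> real) \<Rightarrow> nat \<Rightarrow> (nat \<Rightarrow> nat) pmf" where
  "cat_pmf m l k = Pi_pmf {..<k} 0 (\<lambda>_. level_pmf m l)"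

definition node_pairs :: "nat \<Rightarrow> (nat \<times> nat) set" where
  "node_pairs n = {(u, v). 1 \<le> u \<and> u < v \<and> v \<le> n}"

definition mfng :: "nat \<Rightarrow> (nat \<Rightarrow> real) \<Rightarrow> (nat \<Rightarrow> nat \<Rightarrow> real) \<Rightarrow> nat \<Rightarrow> nat
    \<Rightarrow> (nat \<times> nat \<Rightarrow> bool) pmf" where
  "mfng m l P k n =
     do {
       c \<leftarrow> Pi_pmf {1..n} (\<lambda>_. 0) (\<lambda>_. cat_pmf m l k);
       Pi_pmf (node_pairs n) False
         (\<lambda>(u, v). bernoulli_pmf (\<Prod>r<k. P (c u r) (c v r)))
     }"

end

theory Submission
  imports Defs
begin

text \<open>Reading the categories of the n nodes level by level, the k levels are independent and
  identically distributed, each with the law of the one-level categories. Given the categories,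
  all pairs of S are edges with probability \<open>\<Prod>(u,v)\<in>S. \<Prod>r<k. P (c u r) (c v r)\<close>, which
  factors over the levels. By independence of the levels the expectation of this product is the
  product of k equal one-level expectations, and the one-level expectation is exactly the
  probability of the event in W_1.\<close>

lemma pmf_level_pmf:
  assumes "\<forall>i<m. l i \<ge> 0" "(\<Sum>i<m. l i) = 1"
  shows "pmf (level_pmf m l) i = (if i < m then l i else 0)"
  unfolding level_pmf_def
proof (rule pmf_embed_pmf)
  show "\<And>x. 0 \<le> (if x < m then l x else 0)" using assms by auto
  have "(\<integral>\<^sup>+x. ennreal (if x < m then l x else 0) \<partial>count_space UNIV)
      = (\<Sum>x<m. ennreal (if x < m then l x else 0))"
    by (rule nn_integral_count_space') auto
  also have "\<dots> = ennreal (\<Sum>x<m. l x)"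
    using assms by (subst sum_ennreal[symmetric]) auto
  finally show "(\<integral>\<^sup>+x. ennreal (if x < m then l x else 0) \<partial>count_space UNIV) = 1"
    using assms by simp
qed

lemma set_pmf_level_pmf_subset:
  assumes "\<forall>i<m. l i \<ge> 0" "(\<Sum>i<m. l i) = 1"
  shows "set_pmf (level_pmf m l) \<subseteq> {..<m}"
  using pmf_level_pmf[OF assms] by (auto simp: set_pmf_eq split: if_splits)

lemma Pi_pmf_Pi_pmf_transpose:
  assumes "finite N" "finite K"
  shows "Pi_pmf N (\<lambda>_. d) (\<lambda>_. Pi_pmf K d (\<lambda>_. L))
       = map_pmf (\<lambda>F u r. F r u) (Pi_pmf K (\<lambda>_. d) (\<lambda>_. Pi_pmf N d (\<lambda>_. L)))"
proof (rule pmf_eqI)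
  fix c :: "'a \<Rightarrow> 'b \<Rightarrow> 'c"
  have "inj (\<lambda>(F::'b \<Rightarrow> 'a \<Rightarrow> 'c) u r. F r u)"
    by (auto simp: inj_def fun_eq_iff)
  then have transposed:
    "pmf (map_pmf (\<lambda>F u r. F r u) (Pi_pmf K (\<lambda>_. d) (\<lambda>_. Pi_pmf N d (\<lambda>_. L)))) c
      = pmf (Pi_pmf K (\<lambda>_. d) (\<lambda>_. Pi_pmf N d (\<lambda>_. L))) (\<lambda>r u. c u r)"
    using pmf_map_inj'[of "\<lambda>F u r. F r u" _ "\<lambda>r u. c u r"] by simp
  show "pmf (Pi_pmf N (\<lambda>_. d) (\<lambda>_. Pi_pmf K d (\<lambda>_. L))) c =
        pmf (map_pmf (\<lambda>F u r. F r u) (Pi_pmf K (\<lambda>_. d) (\<lambda>_. Pi_pmf N d (\<lambda>_. L)))) c"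
  proof (cases "\<forall>u r. (u \<notin> N \<or> r \<notin> K) \<longrightarrow> c u r = d")
    case True
    then show ?thesis unfolding transposed using assms
      by (simp add: pmf_Pi fun_eq_iff prod.swap[of _ N K])
  next
    case False
    then obtain u r where ur: "u \<notin> N \<or> r \<notin> K" "c u r \<noteq> d" by blast
    have "pmf (Pi_pmf N (\<lambda>_. d) (\<lambda>_. Pi_pmf K d (\<lambda>_. L))) c = 0"
      using ur assms by (cases "u \<in> N") (auto simp: pmf_Pi fun_eq_iff intro!: prod_zero bexI[of _ u])
    moreover have "pmf (Pi_pmf K (\<lambda>_. d) (\<lambda>_. Pi_pmf N d (\<lambda>_. L))) (\<lambda>r u. c u r) = 0"
      using ur assms by (cases "r \<in> K") (auto simp: pmf_Pi fun_eq_iff intro!: prod_zero bexI[of _ r])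
    ultimately show ?thesis unfolding transposed by simp
  qed
qed

lemma measure_pmf_prob_bind_pmf:
  "measure_pmf.prob (bind_pmf M N) X = measure_pmf.expectation M (\<lambda>x. measure_pmf.prob (N x) X)"
proof -
  have "integrable M (\<lambda>x. measure_pmf.prob (N x) X)"
    by (rule measure_pmf.integrable_const_bound[where B = 1]) auto
  then have "ennreal (measure_pmf.expectation M (\<lambda>x. measure_pmf.prob (N x) X))
      = (\<integral>\<^sup>+x. ennreal (measure_pmf.prob (N x) X) \<partial>M)"
    by (intro nn_integral_eq_integral[symmetric]) auto
  also have "\<dots> = emeasure (bind_pmf M N) X"
    by (subst emeasure_bind_pmf) (simp add: measure_pmf.emeasure_eq_measure)
  finally show ?thesis
    by (simp add: measure_pmf.emeasure_eq_measure Bochner_Integration.integral_nonneg)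
qed

lemma prob_Pi_pmf_bernoulli_all:
  assumes "finite N" "S \<subseteq> N" "\<And>e. e \<in> S \<Longrightarrow> 0 \<le> q e \<and> q e \<le> 1"
  shows "measure_pmf.prob (Pi_pmf N False (\<lambda>e. bernoulli_pmf (q e))) {G. \<forall>e\<in>S. G e}
       = (\<Prod>e\<in>S. q e)"
proof -
  define B where "B e = (if e \<in> S then {True} else UNIV)" for e
  have "{G. \<forall>e\<in>S. G e} = Pi N B"
    using assms(2) by (auto simp: B_def Pi_def)
  then have "measure_pmf.prob (Pi_pmf N False (\<lambda>e. bernoulli_pmf (q e))) {G. \<forall>e\<in>S. G e}
      = (\<Prod>e\<in>N. measure_pmf.prob (bernoulli_pmf (q e)) (B e))"
    using assms(1) by (simp add: measure_Pi_pmf_Pi)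
  also have "\<dots> = (\<Prod>e\<in>N. if e \<in> S then q e else 1)"
    using assms(3) by (intro prod.cong refl) (auto simp: B_def measure_pmf_single)
  also have "\<dots> = (\<Prod>e\<in>S. q e)"
    using prod.inter_restrict[OF assms(1), of q S] Int_absorb1[OF assms(2)] by simp
  finally show ?thesis .
qed

lemma finite_node_pairs: "finite (node_pairs n)"
  by (rule finite_subset[of _ "{1..n} \<times> {1..n}"]) (auto simp: node_pairs_def)

lemma mfng_eq_bind_levels:
  "mfng m l P k n =
     do {
       F \<leftarrow> Pi_pmf {..<k} (\<lambda>_. 0) (\<lambda>_. Pi_pmf {1..n} 0 (\<lambda>_. level_pmf m l));
       Pi_pmf (node_pairs n) False (\<lambda>(u, v). bernoulli_pmf (\<Prod>r<k. P (F r u) (F r v)))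
     }"
proof -
  have "Pi_pmf {1..n} (\<lambda>_. 0) (\<lambda>_. cat_pmf m l k)
      = map_pmf (\<lambda>F u r. F r u) (Pi_pmf {..<k} (\<lambda>_. 0) (\<lambda>_. Pi_pmf {1..n} 0 (\<lambda>_. level_pmf m l)))"
    unfolding cat_pmf_def by (rule Pi_pmf_Pi_pmf_transpose) auto
  then show ?thesis
    unfolding mfng_def by (simp add: bind_map_pmf)
qed

lemma prob_mfng_all_edges:
  assumes l: "\<forall>i<m. l i \<ge> 0" "(\<Sum>i<m. l i) = 1"
    and P: "\<forall>i<m. \<forall>j<m. 0 \<le> P i j \<and> P i j \<le> 1"
    and S: "S \<subseteq> node_pairs n"
  shows "measure_pmf.prob (mfng m l P k n) {G. \<forall>e\<in>S. G e}
       = (measure_pmf.expectation (Pi_pmf {1..n} 0 (\<lambda>_. level_pmf m l))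
            (\<lambda>x. \<Prod>(u, v)\<in>S. P (x u) (x v))) ^ k"
proof -
  define E where "E = Pi_pmf {1..n} 0 (\<lambda>_. level_pmf m l)"
  define g where "g x = (\<Prod>(u, v)\<in>S. P (x u) (x v))" for x :: "nat \<Rightarrow> nat"
  have E_range: "x u < m" if "x \<in> set_pmf E" "u \<in> {1..n}" for x u
    using that set_pmf_level_pmf_subset[OF l] by (auto simp: E_def set_Pi_pmf PiE_dflt_def)
  have S_nodes: "u \<in> {1..n}" "v \<in> {1..n}" if "(u, v) \<in> S" for u v
    using that S by (auto simp: node_pairs_def)
  have P_E: "0 \<le> P (x u) (x v) \<and> P (x u) (x v) \<le> 1" if "x \<in> set_pmf E" "(u, v) \<in> S" for x u v
    using P E_range[OF that(1) S_nodes(1)[OF that(2)]] E_range[OF that(1) S_nodes(2)[OF that(2)]]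
    by blast
  have edges_given_levels:
    "measure_pmf.prob (Pi_pmf (node_pairs n) False
        (\<lambda>(u, v). bernoulli_pmf (\<Prod>r<k. P (F r u) (F r v)))) {G. \<forall>e\<in>S. G e}
      = (\<Prod>r<k. g (F r))"
    if F: "F \<in> set_pmf (Pi_pmf {..<k} (\<lambda>_. 0) (\<lambda>_. E))" for F
  proof -
    have "F r \<in> set_pmf E" if "r < k" for r
      using F that by (auto simp: set_Pi_pmf PiE_dflt_def)
    then have "0 \<le> (\<Prod>r<k. P (F r u) (F r v)) \<and> (\<Prod>r<k. P (F r u) (F r v)) \<le> 1"
      if "(u, v) \<in> S" for u v
      using P_E[OF _ that] by (auto intro!: prod_nonneg prod_le_1)
    then have "measure_pmf.prob (Pi_pmf (node_pairs n) False
        (\<lambda>(u, v). bernoulli_pmf (\<Prod>r<k. P (F r u) (F r v)))) {G. \<forall>e\<in>S. G e}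
      = (\<Prod>(u, v)\<in>S. \<Prod>r<k. P (F r u) (F r v))"
      using prob_Pi_pmf_bernoulli_all[OF finite_node_pairs S, of "\<lambda>(u, v). \<Prod>r<k. P (F r u) (F r v)"]
      by (simp add: case_prod_beta split_beta' cong: prod.cong)
    also have "\<dots> = (\<Prod>r<k. g (F r))"
      unfolding g_def case_prod_unfold by (rule prod.swap)
    finally show ?thesis .
  qed
  have "measure_pmf.prob (mfng m l P k n) {G. \<forall>e\<in>S. G e}
      = measure_pmf.expectation (Pi_pmf {..<k} (\<lambda>_. 0) (\<lambda>_. E)) (\<lambda>F. \<Prod>r<k. g (F r))"
    unfolding mfng_eq_bind_levels measure_pmf_prob_bind_pmf E_def[symmetric]
    by (intro Bochner_Integration.integral_cong_AE AE_pmfI) (auto simp: edges_given_levels)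
  also have "\<dots> = (\<Prod>r<k. measure_pmf.expectation E g)"
  proof (rule expectation_prod_Pi_pmf)
    have "finite (set_pmf E)"
      using set_pmf_level_pmf_subset[OF l]
      by (auto simp: E_def set_Pi_pmf o_def intro!: finite_PiE_dflt intro: finite_subset)
    then show "integrable (measure_pmf E) g" for r
      by (rule integrable_measure_pmf_finite)
    show "0 \<le> g x" if "x \<in> set_pmf E" for r x
      using P_E[OF that] unfolding g_def by (auto intro!: prod_nonneg)
  qed simp
  finally show ?thesis
    by (simp add: E_def g_def[abs_def])
qed

theorem theorem1:
  fixes m k n :: nat and l :: "nat \<Rightarrow> real" and P :: "nat \<Rightarrow> nat \<Rightarrow> real"
    and S :: "(nat \<times> nat) set"
  assumes "m \<ge> 1" and "k \<ge> 1" and "n \<ge> 2"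
    and "\<forall>i<m. l i \<ge> 0" and "(\<Sum>i<m. l i) = 1"
    and "\<forall>i<m. \<forall>j<m. P i j = P j i"
    and "\<forall>i<m. \<forall>j<m. 0 \<le> P i j \<and> P i j \<le> 1"
    and "S \<subseteq> node_pairs n"
  shows "measure_pmf.prob (mfng m l P k n) {G. \<forall>e\<in>S. G e}
       = (measure_pmf.prob (mfng m l P 1 n) {G. \<forall>e\<in>S. G e}) ^ k"
  using prob_mfng_all_edges[OF assms(4,5,7,8), of k] prob_mfng_all_edges[OF assms(4,5,7,8), of 1]
  by simp

end
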